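(* Let $\mathcal{G}=(V,\mathcal{E})$ be a strongly connected digraph with $n$ nodes and let $\tau\in\mathbb{Z}_{>0}$ be an attack duration that is nontrivial for $\mathcal{G}$, i.e. $\tau\ge D$, where $D$ is the diameter of $\mathcal{G}$, and $\tau$ is strictly smaller than the length of every closed walk in $\mathcal{G}$ that starts and ends at the same vertex and visits every vertex at least once. Then the value of the game satisfies $\mathbb{V}\le \frac{\tau}{n}$.
   Context: A Markov chain strategy conforming to $\mathcal{G}$ is a matrix $P=(p_{ij})\in\mathbb{R}^{n\times n}$ with $P\mathbb{1}_n=\mathbb{1}_n$, $p_{ij}\ge 0$ for $(i,j)\in\mathcal{E}$ and $p_{ij}=0$ for $(i,j)\notin\mathcal{E}$. For a Markov chain $(X_k)_{k\ge0}$ with transition matrix $P$, the first hitting time from $i$ to $j$ is $T_{ij}=\min\{k\ge 1: X_k=j\}$ given $X_0=i$ (so $T_{ii}$ is the first return time). The value of the game is $\mathbb{V}=\max_{P}\min_{i,j\in V}\mathbb{P}(T_{ij}(P)\le\tau)$, the maximum taken over all Markov chain strategies $P$ conforming to $\mathcal{G}$. *)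

theory Defs
  imports Complex_Main
begin

definition is_walk :: "nat \<Rightarrow> (nat \<times> nat) set \<Rightarrow> nat list \<Rightarrow> bool" where
  "is_walk n E xs \<longleftrightarrow> xs \<noteq> [] \<and> set xs \<subseteq> {..<n} \<and>
     (\<forall>k. Suc k < length xs \<longrightarrow> (xs ! k, xs ! Suc k) \<in> E)"

definition walk_len :: "nat list \<Rightarrow> nat" where
  "walk_len xs = length xs - 1"

definition strongly_connected :: "nat \<Rightarrow> (nat \<times> nat) set \<Rightarrow> bool" where
  "strongly_connected n E \<longleftrightarrow>
     (\<forall>i<n. \<forall>j<n. \<exists>xs. is_walk n E xs \<and> hd xs = i \<and> last xs = j)"

definition gdist :: "nat \<Rightarrow> (nat \<times> nat) set \<Rightarrow> nat \<Rightarrow> nat \<Rightarrow> nat" where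
  "gdist n E i j = (LEAST k. \<exists>xs. is_walk n E xs \<and> hd xs = i \<and> last xs = j \<and> walk_len xs = k)"

definition diameter :: "nat \<Rightarrow> (nat \<times> nat) set \<Rightarrow> nat" where
  "diameter n E = Max {gdist n E i j | i j. i < n \<and> j < n}"

definition covering_closed_walk :: "nat \<Rightarrow> (nat \<times> nat) set \<Rightarrow> nat list \<Rightarrow> bool" where
  "covering_closed_walk n E xs \<longleftrightarrow> is_walk n E xs \<and> hd xs = last xs \<and> {..<n} \<subseteq> set xs"

text \<open>Markov chain strategy conforming to the graph; matrices are functions
nat => nat => real, with all entries outside {..<n}x{..<n} equal to zero.\<close>
definition conforming_strategy :: "nat \<Rightarrow> (nat \<times> nat) set \<Rightarrow> (nat \<Rightarrow> nat \<Rightarrow> real) \<Rightarrow> bool" where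
  "conforming_strategy n E P \<longleftrightarrow>
     (\<forall>i<n. (\<Sum>j<n. P i j) = 1) \<and>
     (\<forall>i j. (i, j) \<in> E \<and> i < n \<and> j < n \<longrightarrow> P i j \<ge> 0) \<and>
     (\<forall>i j. \<not> ((i, j) \<in> E \<and> i < n \<and> j < n) \<longrightarrow> P i j = 0)"

text \<open>first_hit P n i j k = P(T_ij = k) for the chain started at i,
where T_ij = min {k >= 1. X_k = j}.\<close>
fun first_hit :: "(nat \<Rightarrow> nat \<Rightarrow> real) \<Rightarrow> nat \<Rightarrow> nat \<Rightarrow> nat \<Rightarrow> nat \<Rightarrow> real" where
  "first_hit P n i j 0 = 0"
| "first_hit P n i j (Suc 0) = P i j"
| "first_hit P n i j (Suc (Suc k)) = (\<Sum>h\<in>{..<n} - {j}. P i h * first_hit P n h j (Suc k))"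

definition hit_within :: "(nat \<Rightarrow> nat \<Rightarrow> real) \<Rightarrow> nat \<Rightarrow> nat \<Rightarrow> nat \<Rightarrow> nat \<Rightarrow> real" where
  "hit_within P n i j \<tau> = (\<Sum>k\<in>{1..\<tau>}. first_hit P n i j k)"

definition game_value :: "nat \<Rightarrow> (nat \<times> nat) set \<Rightarrow> nat \<Rightarrow> real" where
  "game_value n E \<tau> = (SUP P \<in> {P. conforming_strategy n E P}.
      Min {hit_within P n i j \<tau> | i j. i < n \<and> j < n})"

end

theory Submission
  imports Defs
begin

text \<open>Started at a fixed vertex, the chain visits at most \<open>\<tau>\<close> distinct vertices during
its first \<open>\<tau>\<close> steps, so the probabilities of hitting the \<open>n\<close> vertices within time \<open>\<tau>\<close>
sum to at most \<open>\<tau>\<close>; hence one of them is at most \<open>\<tau> / n\<close>, whatever the strategy.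
The hypotheses on the graph only serve to make the set of strategies nonempty:
a covering closed walk of length \<open>0\<close> rules out \<open>n = 1\<close>, and for \<open>n \<ge> 2\<close> strong
connectivity gives every vertex an out-edge, so the uniform random walk conforms.\<close>

lemma first_hit_nonneg:
  assumes "\<And>a b. P a b \<ge> 0"
  shows "first_hit P n i j k \<ge> 0"
  using assms
proof (induction P n i j k rule: first_hit.induct)
  case (3 P n i j k)
  then show ?case by (auto intro!: sum_nonneg mult_nonneg_nonneg)
qed simp_all

lemma hit_within_nonneg:
  assumes "\<And>a b. P a b \<ge> 0"
  shows "hit_within P n i j t \<ge> 0"
  unfolding hit_within_def by (auto intro!: sum_nonneg first_hit_nonneg assms)

lemma hit_within_Suc:
  "hit_within P n i j (Suc t) = P i j + (\<Sum>h\<in>{..<n} - {j}. P i h * hit_within P n h j t)"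
proof -
  have "hit_within P n i j (Suc t) = first_hit P n i j 1 + (\<Sum>k\<in>{1..t}. first_hit P n i j (Suc k))"
    unfolding hit_within_def
    by (simp add: sum.atLeast_Suc_atMost sum.shift_bounds_cl_Suc_ivl[symmetric])
  also have "(\<Sum>k\<in>{1..t}. first_hit P n i j (Suc k))
      = (\<Sum>k\<in>{1..t}. \<Sum>h\<in>{..<n} - {j}. P i h * first_hit P n h j k)"
    by (rule sum.cong) (auto simp: Suc_le_eq dest!: gr0_implies_Suc)
  also have "\<dots> = (\<Sum>h\<in>{..<n} - {j}. P i h * hit_within P n h j t)"
    unfolding hit_within_def by (subst sum.swap) (simp add: sum_distrib_left)
  finally show ?thesis by simp
qed

text \<open>Dropping the restriction \<open>h \<noteq> j\<close> in the recursion can only increase the sum; after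
that, summing over \<open>j\<close> decouples and each step contributes at most one.\<close>

lemma sum_hit_within_le:
  assumes nonneg: "\<And>a b. P a b \<ge> 0" and stochastic: "\<And>i. i < n \<Longrightarrow> (\<Sum>j<n. P i j) = 1"
    and "i < n"
  shows "(\<Sum>j<n. hit_within P n i j t) \<le> real t"
  using \<open>i < n\<close>
proof (induction t arbitrary: i)
  case 0
  then show ?case by (simp add: hit_within_def)
next
  case (Suc t)
  have "(\<Sum>j<n. hit_within P n i j (Suc t))
      = (\<Sum>j<n. P i j) + (\<Sum>j<n. \<Sum>h\<in>{..<n} - {j}. P i h * hit_within P n h j t)"
    by (simp add: hit_within_Suc sum.distrib)
  also have "\<dots> \<le> 1 + (\<Sum>j<n. \<Sum>h<n. P i h * hit_within P n h j t)"
    using stochastic[OF Suc.prems]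
    by (auto intro!: sum_mono sum_mono2 mult_nonneg_nonneg hit_within_nonneg nonneg)
  also have "(\<Sum>j<n. \<Sum>h<n. P i h * hit_within P n h j t)
      = (\<Sum>h<n. P i h * (\<Sum>j<n. hit_within P n h j t))"
    by (subst sum.swap) (simp add: sum_distrib_left)
  also have "\<dots> \<le> (\<Sum>h<n. P i h * real t)"
    by (auto intro!: sum_mono mult_left_mono Suc.IH nonneg)
  also have "\<dots> = real t"
    using stochastic[OF Suc.prems] by (simp add: sum_distrib_right[symmetric])
  finally show ?case by simp
qed

lemma conforming_strategy_nonneg:
  assumes "conforming_strategy n E P"
  shows "P a b \<ge> 0"
  using assms unfolding conforming_strategy_def
  by (cases "(a, b) \<in> E \<and> a < n \<and> b < n") auto

lemma Min_hit_within_le: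
  assumes "conforming_strategy n E P" and "0 < n"
  shows "Min {hit_within P n i j \<tau> | i j. i < n \<and> j < n} \<le> real \<tau> / real n"
    (is "?m \<le> _")
proof -
  have "{hit_within P n i j \<tau> | i j. i < n \<and> j < n}
      = (\<lambda>(i, j). hit_within P n i j \<tau>) ` ({..<n} \<times> {..<n})"
    by auto
  then have "?m \<le> hit_within P n 0 j \<tau>" if "j < n" for j
    using that \<open>0 < n\<close> by (auto intro!: Min_le)
  then have "real n * ?m \<le> (\<Sum>j<n. hit_within P n 0 j \<tau>)"
    using sum_mono[of "{..<n}" "\<lambda>_. ?m"] by simp
  also have "\<dots> \<le> real \<tau>"
    using assms by (intro sum_hit_within_le conforming_strategy_nonneg)
      (auto simp: conforming_strategy_def)
  finally show ?thesis
    using \<open>0 < n\<close> by (simp add: field_simps)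
qed

lemma covering_closed_walk_single_vertex: "covering_closed_walk (Suc 0) E [0]"
  unfolding covering_closed_walk_def is_walk_def by auto

lemma is_walk_first_edge:
  assumes "is_walk n E xs" and "hd xs \<noteq> last xs"
  shows "(hd xs, xs ! 1) \<in> E"
proof -
  have "Suc 0 < length xs"
    using assms by (cases xs) (auto simp: is_walk_def)
  then show ?thesis
    using assms(1) unfolding is_walk_def by (metis One_nat_def hd_conv_nth list.size(3) not_less0)
qed

lemma strongly_connected_out_edge:
  assumes "strongly_connected n E" and "2 \<le> n" and "i < n"
  obtains k where "(i, k) \<in> E"
proof -
  define j :: nat where "j = (if i = 0 then 1 else 0)"
  have "j < n" and "j \<noteq> i"
    using \<open>2 \<le> n\<close> by (auto simp: j_def)
  then obtain xs where "is_walk n E xs" "hd xs = i" "last xs = j"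
    using assms unfolding strongly_connected_def by blast
  then show ?thesis
    using is_walk_first_edge \<open>j \<noteq> i\<close> that by metis
qed

definition uniform_strategy :: "(nat \<times> nat) set \<Rightarrow> nat \<Rightarrow> nat \<Rightarrow> real" where
  "uniform_strategy E i j = (if (i, j) \<in> E then 1 / real (card (E `` {i})) else 0)"

lemma uniform_strategy_conforming:
  assumes "E \<subseteq> {..<n} \<times> {..<n}" and "\<And>i. i < n \<Longrightarrow> E `` {i} \<noteq> {}"
  shows "conforming_strategy n E (uniform_strategy E)"
  unfolding conforming_strategy_def
proof (intro conjI allI impI)
  fix i assume "i < n"
  have succ: "E `` {i} \<subseteq> {..<n}"
    using assms(1) by auto
  then have "(\<Sum>j<n. uniform_strategy E i j) = (\<Sum>j\<in>E `` {i}. 1 / real (card (E `` {i})))"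
    by (intro sum.mono_neutral_cong_right) (auto simp: uniform_strategy_def)
  also have "\<dots> = 1"
    using assms(2)[OF \<open>i < n\<close>] finite_subset[OF succ] by simp
  finally show "(\<Sum>j<n. uniform_strategy E i j) = 1" .
qed (use assms(1) in \<open>auto simp: uniform_strategy_def\<close>)

theorem theorem1:
  fixes n :: nat and E :: "(nat \<times> nat) set" and \<tau> :: nat
  assumes "0 < n"
    and "E \<subseteq> {..<n} \<times> {..<n}"
    and "strongly_connected n E"
    and "0 < \<tau>"
    and "diameter n E \<le> \<tau>"
    and "\<forall>xs. covering_closed_walk n E xs \<longrightarrow> \<tau> < walk_len xs"
  shows "game_value n E \<tau> \<le> real \<tau> / real n"
proof -
  have "n \<noteq> Suc 0"
    using assms(6) covering_closed_walk_single_vertex by (force simp: walk_len_def)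
  with \<open>0 < n\<close> have "2 \<le> n" by simp
  then have "E `` {i} \<noteq> {}" if "i < n" for i
    using strongly_connected_out_edge[OF assms(3) _ that] by blast
  then have "conforming_strategy n E (uniform_strategy E)"
    using uniform_strategy_conforming assms(2) by blast
  then show ?thesis
    unfolding game_value_def
    by (intro cSUP_least) (auto intro: Min_hit_within_le \<open>0 < n\<close>)
qed

end
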